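(* Let $\Omega_0\subset\mathbb{R}^3$ be a bounded domain (the reference configuration) and let $u(X,t)$ be a sufficiently smooth displacement field on $\Omega_0\times[t_0,t_e]$ with velocity $v=\partial u/\partial t$. Define the deformation gradient $F=I+\mathrm{Grad}(u)$, the Green strain $E=\tfrac12(F^T\cdot F-I)$, the second Piola–Kirchhoff stress $S=C:E$ with $C=2\mu\,\mathcal{I}_s+\lambda\, I\otimes I$ (St. Venant–Kirchhoff material, Lamé constants $\mu,\lambda$), and the linear momentum $p=\rho_0 v$ with constant density $\rho_0>0$. Suppose the local balance of linear momentum without body forces holds: $\rho_0\dot v=\mathrm{Div}(F\cdot S)$ in $\Omega_0$. Let $$H(p,E)=\frac12\int_{\Omega_0}\Big(\frac{1}{\rho_0}\,p\cdot p+E:C:E\Big)\,d\Omega_0 ,$$ regarded as a functional of $(p,E,F)$ not depending explicitly on $F$, so that its variational derivatives are $\frac{\delta H}{\delta p}=v$, $\frac{\delta H}{\delta E}=C:E=S$, $\frac{\delta H}{\delta F}=0$. Then $(p,E,F)$ satisfy $$\begin{bmatrix}\dot p\\ \dot E\\ \dot F\end{bmatrix}=\mathcal{J}(F)\begin{bmatrix}\frac{\delta H}{\delta p}\\ \frac{\delta H}{\delta E}\\ \frac{\delta H}{\delta F}\end{bmatrix},\qquad \mathcal{J}(F)=\begin{bmatrix}0&\mathrm{Div}(F\cdot\,\times\,)&\mathrm{Div}(\times)\\ a(F,\times)&0&0\\ \mathrm{Grad}(\times)&0&0\end{bmatrix},$$ where $a(F,w)=\tfrac12\big(F^T\cdot\mathrm{Grad}(w)+\mathrm{Grad}(w)^T\cdot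 F\big)$, and the operator $\mathcal{J}(F)$ (acting on triples consisting of a vector field, a symmetric second-order tensor field and a second-order tensor field) is formally skew-adjoint with respect to the $L^2(\Omega_0)$ pairing.
   Context: Tensor conventions in Cartesian index notation with summation over repeated indices: $(A\cdot B)_{ij}=A_{ik}B_{kj}$, $A:B=A_{ij}B_{ij}$, $\mathrm{Grad}(w)_{ij}=\partial w_i/\partial X_j$, $\mathrm{Div}(A)_i=\partial A_{ij}/\partial X_j$; all derivatives are with respect to the material coordinate $X\in\Omega_0$. $I$ is the second-order identity, $\mathcal{I}_s$ the symmetric fourth-order identity tensor, and $(I\otimes I)_{ijkl}=\delta_{ij}\delta_{kl}$. A dot over a quantity denotes its time derivative. "Formally skew-adjoint" means $\langle \mathbf{w},\mathcal{J}(F)\mathbf{z}\rangle_{L^2}=-\langle \mathcal{J}(F)\mathbf{w},\mathbf{z}\rangle_{L^2}$ for all smooth, compactly supported triples $\mathbf{w},\mathbf{z}$ (vector field, symmetric tensor field, tensor field), the pairing being the sum of the integrals of the componentwise inner products ($\cdot$ for vectors, $:$ for tensors). *)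

theory Defs
  imports "HOL-Analysis.Analysis"
begin

type_synonym vec3 = "real^3"
type_synonym ten3 = "real^3^3"

definition dd :: "('a::real_normed_vector \<Rightarrow> 'b::real_normed_vector) \<Rightarrow> 'a \<Rightarrow> 'a \<Rightarrow> 'b" where
  "dd f h x = vector_derivative (\<lambda>s. f (x + s *\<^sub>R h)) (at 0)"

fun dirs :: "'a::real_normed_vector list \<Rightarrow> ('a \<Rightarrow> 'b::real_normed_vector) \<Rightarrow> 'a \<Rightarrow> 'b" where
  "dirs [] f = f"
| "dirs (h # hs) f = dd (dirs hs f) h"

definition smooth_on :: "'a::real_normed_vector set \<Rightarrow> ('a \<Rightarrow> 'b::real_normed_vector) \<Rightarrow> bool" where
  "smooth_on S f \<longleftrightarrow> open S \<and>
     (\<forall>hs. continuous_on S (dirs hs f) \<and>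
        (\<forall>x\<in>S. \<forall>h. (\<lambda>s. dirs hs f (x + s *\<^sub>R h)) differentiable (at 0)))"

definition pd :: "(vec3 \<Rightarrow> 'b::real_normed_vector) \<Rightarrow> vec3 \<Rightarrow> 3 \<Rightarrow> 'b" where
  "pd f X j = dd f (axis j 1) X"

definition Grad :: "(vec3 \<Rightarrow> vec3) \<Rightarrow> vec3 \<Rightarrow> ten3" where
  "Grad w X = (\<chi> i j. pd w X j $ i)"

definition Div :: "(vec3 \<Rightarrow> ten3) \<Rightarrow> vec3 \<Rightarrow> vec3" where
  "Div A X = (\<chi> i. \<Sum>j\<in>UNIV. pd A X j $ i $ j)"

definition ddot :: "ten3 \<Rightarrow> ten3 \<Rightarrow> real" where
  "ddot A B = (\<Sum>i\<in>UNIV. \<Sum>j\<in>UNIV. A $ i $ j * B $ i $ j)"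

text \<open>C : A for C = 2 mu I_s + lambda I (x) I, where I_s : A = (A + A^T)/2.\<close>
definition elast :: "real \<Rightarrow> real \<Rightarrow> ten3 \<Rightarrow> ten3" where
  "elast mu lam A = (2 * mu) *\<^sub>R ((1/2) *\<^sub>R (A + transpose A)) + (lam * trace A) *\<^sub>R mat 1"

definition tder :: "(real \<Rightarrow> 'b::real_normed_vector) \<Rightarrow> real \<Rightarrow> 'b" where
  "tder f t = vector_derivative f (at t)"

definition vel :: "(vec3 \<Rightarrow> real \<Rightarrow> vec3) \<Rightarrow> vec3 \<Rightarrow> real \<Rightarrow> vec3" where
  "vel u X t = tder (\<lambda>s. u X s) t"

definition defgrad :: "(vec3 \<Rightarrow> real \<Rightarrow> vec3) \<Rightarrow> vec3 \<Rightarrow> real \<Rightarrow> ten3" where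
  "defgrad u X t = mat 1 + Grad (\<lambda>Y. u Y t) X"

definition green :: "(vec3 \<Rightarrow> real \<Rightarrow> vec3) \<Rightarrow> vec3 \<Rightarrow> real \<Rightarrow> ten3" where
  "green u X t = (1/2) *\<^sub>R (transpose (defgrad u X t) ** defgrad u X t - mat 1)"

definition PK2 :: "real \<Rightarrow> real \<Rightarrow> (vec3 \<Rightarrow> real \<Rightarrow> vec3) \<Rightarrow> vec3 \<Rightarrow> real \<Rightarrow> ten3" where
  "PK2 mu lam u X t = elast mu lam (green u X t)"

definition mom :: "real \<Rightarrow> (vec3 \<Rightarrow> real \<Rightarrow> vec3) \<Rightarrow> vec3 \<Rightarrow> real \<Rightarrow> vec3" where
  "mom rho0 u X t = rho0 *\<^sub>R vel u X t"

definition Ham :: "real \<Rightarrow> real \<Rightarrow> real \<Rightarrow> vec3 set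
    \<Rightarrow> (vec3 \<Rightarrow> vec3) \<Rightarrow> (vec3 \<Rightarrow> ten3) \<Rightarrow> (vec3 \<Rightarrow> ten3) \<Rightarrow> real" where
  "Ham rho0 mu lam \<Omega> p E F =
     (1/2) * integral \<Omega> (\<lambda>X. (1/rho0) * (p X \<bullet> p X) + ddot (E X) (elast mu lam (E X)))"

definition csupp :: "(vec3 \<Rightarrow> 'b::real_normed_vector) \<Rightarrow> vec3 set" where
  "csupp w = closure {X. w X \<noteq> 0}"

definition test_field :: "vec3 set \<Rightarrow> (vec3 \<Rightarrow> 'b::real_normed_vector) \<Rightarrow> bool" where
  "test_field \<Omega> w \<longleftrightarrow> smooth_on UNIV w \<and> compact (csupp w) \<and> csupp w \<subseteq> \<Omega>"

definition test_sym :: "vec3 set \<Rightarrow> (vec3 \<Rightarrow> ten3) \<Rightarrow> bool" where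
  "test_sym \<Omega> w \<longleftrightarrow> test_field \<Omega> w \<and> (\<forall>X. transpose (w X) = w X)"

text \<open>Variational derivatives of a functional of (p, E, F) (E ranging over symmetric fields),
  as the L2-representers of the Gateaux derivatives along smooth compactly supported variations.\<close>
definition is_vd_p :: "vec3 set \<Rightarrow> ((vec3 \<Rightarrow> vec3) \<Rightarrow> (vec3 \<Rightarrow> ten3) \<Rightarrow> (vec3 \<Rightarrow> ten3) \<Rightarrow> real)
    \<Rightarrow> (vec3 \<Rightarrow> vec3) \<Rightarrow> (vec3 \<Rightarrow> ten3) \<Rightarrow> (vec3 \<Rightarrow> ten3) \<Rightarrow> (vec3 \<Rightarrow> vec3) \<Rightarrow> bool" where
  "is_vd_p \<Omega> H p E F g \<longleftrightarrow> (\<forall>\<delta>. test_field \<Omega> \<delta> \<longrightarrow>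
     ((\<lambda>\<epsilon>. H (\<lambda>X. p X + \<epsilon> *\<^sub>R \<delta> X) E F) has_real_derivative
        integral \<Omega> (\<lambda>X. g X \<bullet> \<delta> X)) (at 0))"

definition is_vd_E :: "vec3 set \<Rightarrow> ((vec3 \<Rightarrow> vec3) \<Rightarrow> (vec3 \<Rightarrow> ten3) \<Rightarrow> (vec3 \<Rightarrow> ten3) \<Rightarrow> real)
    \<Rightarrow> (vec3 \<Rightarrow> vec3) \<Rightarrow> (vec3 \<Rightarrow> ten3) \<Rightarrow> (vec3 \<Rightarrow> ten3) \<Rightarrow> (vec3 \<Rightarrow> ten3) \<Rightarrow> bool" where
  "is_vd_E \<Omega> H p E F g \<longleftrightarrow> (\<forall>\<delta>. test_sym \<Omega> \<delta> \<longrightarrow>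
     ((\<lambda>\<epsilon>. H p (\<lambda>X. E X + \<epsilon> *\<^sub>R \<delta> X) F) has_real_derivative
        integral \<Omega> (\<lambda>X. ddot (g X) (\<delta> X))) (at 0))"

definition is_vd_F :: "vec3 set \<Rightarrow> ((vec3 \<Rightarrow> vec3) \<Rightarrow> (vec3 \<Rightarrow> ten3) \<Rightarrow> (vec3 \<Rightarrow> ten3) \<Rightarrow> real)
    \<Rightarrow> (vec3 \<Rightarrow> vec3) \<Rightarrow> (vec3 \<Rightarrow> ten3) \<Rightarrow> (vec3 \<Rightarrow> ten3) \<Rightarrow> (vec3 \<Rightarrow> ten3) \<Rightarrow> bool" where
  "is_vd_F \<Omega> H p E F g \<longleftrightarrow> (\<forall>\<delta>. test_field \<Omega> \<delta> \<longrightarrow>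
     ((\<lambda>\<epsilon>. H p E (\<lambda>X. F X + \<epsilon> *\<^sub>R \<delta> X)) has_real_derivative
        integral \<Omega> (\<lambda>X. ddot (g X) (\<delta> X))) (at 0))"

definition aop :: "(vec3 \<Rightarrow> ten3) \<Rightarrow> (vec3 \<Rightarrow> vec3) \<Rightarrow> vec3 \<Rightarrow> ten3" where
  "aop F w X = (1/2) *\<^sub>R (transpose (F X) ** Grad w X + transpose (Grad w X) ** F X)"

type_synonym triple = "(vec3 \<Rightarrow> vec3) \<times> (vec3 \<Rightarrow> ten3) \<times> (vec3 \<Rightarrow> ten3)"

definition Jop :: "(vec3 \<Rightarrow> ten3) \<Rightarrow> triple \<Rightarrow> triple" where
  "Jop F w = (case w of (w1, w2, w3) \<Rightarrow>
     (\<lambda>X. Div (\<lambda>Y. F Y ** w2 Y) X + Div w3 X, aop F w1, Grad w1))"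

definition evalT :: "triple \<Rightarrow> vec3 \<Rightarrow> vec3 \<times> ten3 \<times> ten3" where
  "evalT w X = (case w of (w1, w2, w3) \<Rightarrow> (w1 X, w2 X, w3 X))"

definition pairing :: "vec3 set \<Rightarrow> triple \<Rightarrow> triple \<Rightarrow> real" where
  "pairing \<Omega> w z = (case w of (w1, w2, w3) \<Rightarrow> case z of (z1, z2, z3) \<Rightarrow>
     integral \<Omega> (\<lambda>X. w1 X \<bullet> z1 X + ddot (w2 X) (z2 X) + ddot (w3 X) (z3 X)))"

definition test_triple :: "vec3 set \<Rightarrow> triple \<Rightarrow> bool" where
  "test_triple \<Omega> w \<longleftrightarrow> (case w of (w1, w2, w3) \<Rightarrow>
     test_field \<Omega> w1 \<and> test_sym \<Omega> w2 \<and> test_field \<Omega> w3)"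

definition formally_skew_adjoint :: "vec3 set \<Rightarrow> (triple \<Rightarrow> triple) \<Rightarrow> bool" where
  "formally_skew_adjoint \<Omega> J \<longleftrightarrow> (\<forall>w z. test_triple \<Omega> w \<and> test_triple \<Omega> z \<longrightarrow>
     pairing \<Omega> w (J z) = - pairing \<Omega> (J w) z)"

end

(*
  The evolution equations hold pointwise: p' = rho0 v' is Div(F S) by the balance law, F' = Grad v
  because the mixed partial derivatives of the smooth displacement commute, and E' = a(F, v) by the
  product rule. H is quadratic in p and in E, which gives the variational derivatives. For
  skew-adjointness, a symmetric S satisfies S : a(F, w) = (F S) : Grad w, so the integrand of
  <w, J z> + <J w, z> is the divergence of the vector field w1 (F z2 + z3) + z1 (F w2 + w3); this field
  has compact support in Omega0, hence integrates to zero.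
*)
theory Submission
  imports Defs
begin

section \<open>Tensor algebra\<close>

lemma bounded_bilinear_matrix_matrix_mult:
  "bounded_bilinear ((**) :: real^'n^'m \<Rightarrow> real^'k^'n \<Rightarrow> real^'k^'m)"
  unfolding bilinear_conv_bounded_bilinear[symmetric] bilinear_def
  by (auto intro!: linearI simp: vec_eq_iff matrix_matrix_mult_def sum.distrib
      sum_distrib_left algebra_simps)

lemma bounded_bilinear_vector_matrix_mult:
  "bounded_bilinear ((v*) :: real^'m \<Rightarrow> real^'n^'m \<Rightarrow> real^'n)"
  unfolding bilinear_conv_bounded_bilinear[symmetric] bilinear_def
  by (auto intro!: linearI simp: vec_eq_iff vector_matrix_mult_def sum.distrib
      sum_distrib_left algebra_simps)

lemma bounded_bilinear_ddot: "bounded_bilinear ddot"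
  unfolding bilinear_conv_bounded_bilinear[symmetric] bilinear_def
  by (auto intro!: linearI simp: ddot_def sum.distrib sum_distrib_left algebra_simps)

lemma bounded_linear_transpose: "bounded_linear (transpose :: real^'n^'m \<Rightarrow> real^'m^'n)"
  unfolding linear_conv_bounded_linear[symmetric]
  by (auto intro!: linearI simp: vec_eq_iff transpose_def)

lemma bounded_linear_elast: "bounded_linear (elast mu lam)"
  unfolding linear_conv_bounded_linear[symmetric]
  by (auto intro!: linearI simp: elast_def vec_eq_iff transpose_def trace_def mat_def
      sum.distrib sum_distrib_left algebra_simps)

lemmas continuous_on_transpose [continuous_intros] =
  bounded_linear.continuous_on[OF bounded_linear_transpose]
lemmas continuous_on_elast [continuous_intros] =
  bounded_linear.continuous_on[OF bounded_linear_elast]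
lemmas continuous_on_matrix_matrix_mult [continuous_intros] =
  bounded_bilinear.continuous_on[OF bounded_bilinear_matrix_matrix_mult]
lemmas continuous_on_ddot [continuous_intros] =
  bounded_bilinear.continuous_on[OF bounded_bilinear_ddot]

lemma ddot_commute: "ddot A B = ddot B A"
  unfolding ddot_def by (simp add: mult.commute)

lemma ddot_transpose: "ddot (transpose A) (transpose B) = ddot A B"
  unfolding ddot_def transpose_def by (subst sum.swap) simp

lemma ddot_matrix_mult_right: "ddot A (B ** C) = ddot (transpose B ** A) C"
proof -
  have "ddot A (B ** C) = (\<Sum>i\<in>UNIV. \<Sum>j\<in>UNIV. \<Sum>k\<in>UNIV. A $ i $ j * B $ i $ k * C $ k $ j)"
    unfolding ddot_def matrix_matrix_mult_def by (simp add: sum_distrib_left mult.assoc)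
  also have "\<dots> = (\<Sum>i\<in>UNIV. \<Sum>k\<in>UNIV. \<Sum>j\<in>UNIV. A $ i $ j * B $ i $ k * C $ k $ j)"
    by (intro sum.cong refl sum.swap)
  also have "\<dots> = (\<Sum>k\<in>UNIV. \<Sum>i\<in>UNIV. \<Sum>j\<in>UNIV. A $ i $ j * B $ i $ k * C $ k $ j)"
    by (rule sum.swap)
  also have "\<dots> = (\<Sum>k\<in>UNIV. \<Sum>j\<in>UNIV. \<Sum>i\<in>UNIV. A $ i $ j * B $ i $ k * C $ k $ j)"
    by (intro sum.cong refl sum.swap)
  also have "\<dots> = ddot (transpose B ** A) C"
    unfolding ddot_def matrix_matrix_mult_def transpose_def by (simp add: sum_distrib_left mult_ac)
  finally show ?thesis .
qed

lemma ddot_symmetrized_product: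
  assumes "transpose S = S"
  shows "ddot S ((1/2) *\<^sub>R (transpose F ** G + transpose G ** F)) = ddot (F ** S) G"
proof -
  have "ddot S (transpose G ** F) = ddot S (transpose F ** G)"
    using ddot_transpose[of S "transpose G ** F"] assms by (simp add: matrix_transpose_mul)
  then show ?thesis
    using ddot_matrix_mult_right[of S "transpose F" G]
    by (simp add: bounded_bilinear.add_right[OF bounded_bilinear_ddot]
        bounded_bilinear.scaleR_right[OF bounded_bilinear_ddot])
qed

lemma ddot_elast_commute: "ddot A (elast mu lam B) = ddot B (elast mu lam A)"
  unfolding ddot_def elast_def by (simp add: transpose_def trace_def mat_def sum_3 algebra_simps)

lemma ddot_elast_quadratic:
  "ddot (A + \<epsilon> *\<^sub>R B) (elast mu lam (A + \<epsilon> *\<^sub>R B))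
    = ddot A (elast mu lam A) + 2 * \<epsilon> * ddot (elast mu lam A) B + \<epsilon>\<^sup>2 * ddot B (elast mu lam B)"
proof -
  have "elast mu lam (A + \<epsilon> *\<^sub>R B) = elast mu lam A + \<epsilon> *\<^sub>R elast mu lam B"
    using bounded_linear.linear[OF bounded_linear_elast] by (simp add: linear_add linear_scale)
  then have "ddot (A + \<epsilon> *\<^sub>R B) (elast mu lam (A + \<epsilon> *\<^sub>R B))
      = ddot A (elast mu lam A) + \<epsilon> * ddot A (elast mu lam B) + \<epsilon> * ddot B (elast mu lam A)
        + \<epsilon> * (\<epsilon> * ddot B (elast mu lam B))"
    by (simp add: bounded_bilinear.add_left[OF bounded_bilinear_ddot]
        bounded_bilinear.add_right[OF bounded_bilinear_ddot]
        bounded_bilinear.scaleR_left[OF bounded_bilinear_ddot]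
        bounded_bilinear.scaleR_right[OF bounded_bilinear_ddot] distrib_left)
  then show ?thesis
    using ddot_elast_commute[of A mu lam B] ddot_commute[of B "elast mu lam A"]
    by (simp add: power2_eq_square)
qed

lemma has_vector_derivative_vec_lambda:
  fixes f :: "'i::finite \<Rightarrow> real \<Rightarrow> 'a::real_normed_vector"
  assumes "\<And>i. (f i has_vector_derivative f' i) (at x within S)"
  shows "((\<lambda>s. \<chi> i. f i s) has_vector_derivative (\<chi> i. f' i)) (at x within S)"
proof -
  have "((\<lambda>y. (1 / norm (y - x)) *\<^sub>R (f i y - (f i x + (y - x) *\<^sub>R f' i))) \<longlongrightarrow> 0) (at x within S)"
    for i
    using assms[of i] unfolding has_vector_derivative_def has_derivative_within by auto
  then have "((\<lambda>y. (1 / norm (y - x)) *\<^sub>R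
      ((\<chi> i. f i y) - ((\<chi> i. f i x) + (y - x) *\<^sub>R (\<chi> i. f' i)))) \<longlongrightarrow> 0) (at x within S)"
    by (intro vec_tendstoI) simp
  then show ?thesis
    unfolding has_vector_derivative_def has_derivative_within by (simp add: bounded_linear_scaleR_left)
qed

lemma has_vector_derivative_transpose:
  "(f has_vector_derivative f') F \<Longrightarrow> ((\<lambda>s. transpose (f s)) has_vector_derivative transpose f') F"
  for f :: "real \<Rightarrow> real^'n^'m"
  by (rule bounded_linear.has_vector_derivative[OF bounded_linear_transpose])

lemma has_vector_derivative_green_strain:
  fixes F :: "real \<Rightarrow> real^'n^'n"
  assumes "(F has_vector_derivative F') (at t)"
  shows "((\<lambda>s. (1/2) *\<^sub>R (transpose (F s) ** F s - mat 1)) has_vector_derivative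
           (1/2) *\<^sub>R (transpose (F t) ** F' + transpose F' ** F t)) (at t)"
  by (auto intro!: derivative_eq_intros assms
      bounded_bilinear.has_vector_derivative[OF bounded_bilinear_matrix_matrix_mult]
      has_vector_derivative_transpose)

section \<open>Symmetry of mixed directional derivatives\<close>

lemma open_line_preimage:
  fixes x v :: "'a::real_normed_vector"
  assumes "open W"
  shows "open {s::real. x + s *\<^sub>R v \<in> W}"
proof -
  have "open ((\<lambda>s. x + s *\<^sub>R v) -` W)"
    by (rule continuous_open_vimage[OF assms]) (intro continuous_intros)
  then show ?thesis by (simp add: vimage_def)
qed

lemma has_real_derivative_line_shift:
  fixes g :: "'a::real_normed_vector \<Rightarrow> real"
  assumes "((\<lambda>s. g ((y + s0 *\<^sub>R v) + s *\<^sub>R v)) has_real_derivative D) (at 0)"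
  shows "((\<lambda>s. g (y + s *\<^sub>R v)) has_real_derivative D) (at s0)"
proof -
  have "((\<lambda>s. g (y + (s + s0) *\<^sub>R v)) has_real_derivative D) (at 0)"
    using assms by (simp add: scaleR_add_left algebra_simps)
  then show ?thesis using DERIV_shift[of "\<lambda>s. g (y + s *\<^sub>R v)" D 0 s0] by simp
qed

lemma second_difference_mean_value:
  fixes g gk ghk :: "'a::real_normed_vector \<Rightarrow> real"
  assumes dk: "\<And>y. y\<in>W \<Longrightarrow> ((\<lambda>s. g (y + s *\<^sub>R k)) has_real_derivative gk y) (at 0)"
    and dkh: "\<And>y. y\<in>W \<Longrightarrow> ((\<lambda>s. gk (y + s *\<^sub>R h)) has_real_derivative ghk y) (at 0)"
    and a: "a > 0"
    and box: "\<And>\<sigma> \<tau>. 0 \<le> \<sigma> \<Longrightarrow> \<sigma> \<le> a \<Longrightarrow> 0 \<le> \<tau> \<Longrightarrow> \<tau> \<le> a \<Longrightarrow> x + \<sigma> *\<^sub>R h + \<tau> *\<^sub>R k \<in> W"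
  shows "\<exists>\<sigma> \<tau>. 0 < \<sigma> \<and> \<sigma> < a \<and> 0 < \<tau> \<and> \<tau> < a \<and>
     g (x + a *\<^sub>R h + a *\<^sub>R k) - g (x + a *\<^sub>R k) - g (x + a *\<^sub>R h) + g x = a * a * ghk (x + \<sigma> *\<^sub>R h + \<tau> *\<^sub>R k)"
proof -
  define \<phi> where "\<phi> s = g ((x + a *\<^sub>R h) + s *\<^sub>R k) - g (x + s *\<^sub>R k)" for s
  have dphi: "DERIV \<phi> s :> gk ((x + a *\<^sub>R h) + s *\<^sub>R k) - gk (x + s *\<^sub>R k)" if "0 \<le> s" "s \<le> a" for s
  proof -
    have i1: "(x + a *\<^sub>R h) + s *\<^sub>R k \<in> W" using box[of a s] that a by (simp add: add.assoc)
    have i2: "x + s *\<^sub>R k \<in> W" using box[of 0 s] that a by simp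
    show ?thesis unfolding \<phi>_def
      by (rule DERIV_diff[OF has_real_derivative_line_shift[OF dk[OF i1]] has_real_derivative_line_shift[OF dk[OF i2]]])
  qed
  then obtain \<tau> where \<tau>: "0 < \<tau>" "\<tau> < a" "\<phi> a - \<phi> 0 = (a - 0) * (gk ((x + a *\<^sub>R h) + \<tau> *\<^sub>R k) - gk (x + \<tau> *\<^sub>R k))"
    using MVT2[of 0 a \<phi> "\<lambda>s. gk ((x + a *\<^sub>R h) + s *\<^sub>R k) - gk (x + s *\<^sub>R k)", OF a dphi] by auto
  define \<psi> where "\<psi> s = gk ((x + \<tau> *\<^sub>R k) + s *\<^sub>R h)" for s
  have dpsi: "DERIV \<psi> s :> ghk ((x + \<tau> *\<^sub>R k) + s *\<^sub>R h)" if "0 \<le> s" "s \<le> a" for s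
  proof -
    have i1: "(x + \<tau> *\<^sub>R k) + s *\<^sub>R h \<in> W" using box[of s \<tau>] that \<tau> by (simp add: algebra_simps)
    show ?thesis unfolding \<psi>_def
      by (rule has_real_derivative_line_shift[OF dkh[OF i1]])
  qed
  then obtain \<sigma> where \<sigma>: "0 < \<sigma>" "\<sigma> < a" "\<psi> a - \<psi> 0 = (a - 0) * ghk ((x + \<tau> *\<^sub>R k) + \<sigma> *\<^sub>R h)"
    using MVT2[of 0 a \<psi> "\<lambda>s. ghk ((x + \<tau> *\<^sub>R k) + s *\<^sub>R h)", OF a dpsi] by auto
  have "g (x + a *\<^sub>R h + a *\<^sub>R k) - g (x + a *\<^sub>R k) - g (x + a *\<^sub>R h) + g x = \<phi> a - \<phi> 0"
    unfolding \<phi>_def by simp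
  also have "\<dots> = a * (\<psi> a - \<psi> 0)" using \<tau>(3) unfolding \<psi>_def by (simp add: algebra_simps)
  also have "\<dots> = a * a * ghk (x + \<sigma> *\<^sub>R h + \<tau> *\<^sub>R k)" using \<sigma>(3) by (simp add: algebra_simps)
  finally show ?thesis using \<sigma> \<tau> by blast
qed

lemma small_rectangle:
  fixes x h k :: "'a::real_normed_vector"
  assumes "d > 0"
  obtains a where "a > 0"
    "\<And>\<sigma> \<tau>. 0 \<le> \<sigma> \<Longrightarrow> \<sigma> \<le> a \<Longrightarrow> 0 \<le> \<tau> \<Longrightarrow> \<tau> \<le> a \<Longrightarrow> dist (x + \<sigma> *\<^sub>R h + \<tau> *\<^sub>R k) x < d"
proof -
  define a where "a = d / (2 * (norm h + norm k + 1))"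
  have pos: "2 * (norm h + norm k + 1) > 0" by (smt (verit) norm_ge_zero)
  have "a > 0" unfolding a_def using assms pos by simp
  have "dist (x + \<sigma> *\<^sub>R h + \<tau> *\<^sub>R k) x < d" if "0 \<le> \<sigma>" "\<sigma> \<le> a" "0 \<le> \<tau>" "\<tau> \<le> a" for \<sigma> \<tau>
  proof -
    have "dist (x + \<sigma> *\<^sub>R h + \<tau> *\<^sub>R k) x \<le> \<sigma> * norm h + \<tau> * norm k"
      using norm_triangle_ineq[of "\<sigma> *\<^sub>R h" "\<tau> *\<^sub>R k"] that by (simp add: dist_norm)
    also have "\<dots> \<le> a * (norm h + norm k)"
      using that by (simp add: distrib_left add_mono mult_right_mono)
    also have "\<dots> < a * (2 * (norm h + norm k + 1))"
      by (rule mult_strict_left_mono[OF _ \<open>a > 0\<close>]) (smt (verit) norm_ge_zero)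
    also have "\<dots> = d"
      using pos by (simp add: a_def)
    finally show ?thesis .
  qed
  then show ?thesis using that \<open>a > 0\<close> by blast
qed

lemma directional_derivatives_commute_real:
  fixes g gh gk ghk gkh :: "'a::real_normed_vector \<Rightarrow> real"
  assumes W: "open W" "x \<in> W"
    and dh: "\<And>y. y \<in> W \<Longrightarrow> ((\<lambda>s. g (y + s *\<^sub>R h)) has_real_derivative gh y) (at 0)"
    and dk: "\<And>y. y \<in> W \<Longrightarrow> ((\<lambda>s. g (y + s *\<^sub>R k)) has_real_derivative gk y) (at 0)"
    and dkh: "\<And>y. y \<in> W \<Longrightarrow> ((\<lambda>s. gk (y + s *\<^sub>R h)) has_real_derivative ghk y) (at 0)"
    and dhk: "\<And>y. y \<in> W \<Longrightarrow> ((\<lambda>s. gh (y + s *\<^sub>R k)) has_real_derivative gkh y) (at 0)"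
    and c1: "continuous_on W ghk" and c2: "continuous_on W gkh"
  shows "ghk x = gkh x"
proof (rule ccontr)
  define \<epsilon> where "\<epsilon> = \<bar>ghk x - gkh x\<bar> / 2"
  assume "ghk x \<noteq> gkh x"
  then have "\<epsilon> > 0" by (simp add: \<epsilon>_def)
  obtain d1 where d1: "d1 > 0" "\<forall>y\<in>W. dist y x < d1 \<longrightarrow> dist (ghk y) (ghk x) < \<epsilon>"
    using c1 W(2) \<open>\<epsilon> > 0\<close> unfolding continuous_on_iff by blast
  obtain d2 where d2: "d2 > 0" "\<forall>y\<in>W. dist y x < d2 \<longrightarrow> dist (gkh y) (gkh x) < \<epsilon>"
    using c2 W(2) \<open>\<epsilon> > 0\<close> unfolding continuous_on_iff by blast
  obtain d0 where d0: "d0 > 0" "ball x d0 \<subseteq> W"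
    using W openE by blast
  obtain a where a: "a > 0" and near: "\<And>\<sigma> \<tau>. 0 \<le> \<sigma> \<Longrightarrow> \<sigma> \<le> a \<Longrightarrow> 0 \<le> \<tau> \<Longrightarrow> \<tau> \<le> a \<Longrightarrow>
      dist (x + \<sigma> *\<^sub>R h + \<tau> *\<^sub>R k) x < min d0 (min d1 d2)"
    using small_rectangle[where d = "min d0 (min d1 d2)" and x = x and h = h and k = k] d0(1) d1(1) d2(1) by auto
  have inW: "x + \<sigma> *\<^sub>R h + \<tau> *\<^sub>R k \<in> W" if "0 \<le> \<sigma>" "\<sigma> \<le> a" "0 \<le> \<tau>" "\<tau> \<le> a" for \<sigma> \<tau>
    using near[OF that] d0(2) by (auto simp: dist_commute)
  have inW': "x + \<tau> *\<^sub>R k + \<sigma> *\<^sub>R h \<in> W" if "0 \<le> \<tau>" "\<tau> \<le> a" "0 \<le> \<sigma>" "\<sigma> \<le> a" for \<sigma> \<tau>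
    using inW[OF that(3,4,1,2)] by (simp add: add_ac)
  obtain \<sigma>1 \<tau>1 where s1: "0 < \<sigma>1" "\<sigma>1 < a" "0 < \<tau>1" "\<tau>1 < a"
    "g (x + a *\<^sub>R h + a *\<^sub>R k) - g (x + a *\<^sub>R k) - g (x + a *\<^sub>R h) + g x
       = a * a * ghk (x + \<sigma>1 *\<^sub>R h + \<tau>1 *\<^sub>R k)"
    using second_difference_mean_value[of W g k gk h ghk a x, OF dk dkh a inW] by blast
  obtain \<sigma>2 \<tau>2 where s2: "0 < \<sigma>2" "\<sigma>2 < a" "0 < \<tau>2" "\<tau>2 < a"
    "g (x + a *\<^sub>R k + a *\<^sub>R h) - g (x + a *\<^sub>R h) - g (x + a *\<^sub>R k) + g x
       = a * a * gkh (x + \<sigma>2 *\<^sub>R k + \<tau>2 *\<^sub>R h)"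
    using second_difference_mean_value[of W g h gh k gkh a x, OF dh dhk a inW'] by blast
  have swap: "x + a *\<^sub>R k + a *\<^sub>R h = x + a *\<^sub>R h + a *\<^sub>R k"
    by (simp add: add_ac)
  have swap2: "x + \<sigma>2 *\<^sub>R k + \<tau>2 *\<^sub>R h = x + \<tau>2 *\<^sub>R h + \<sigma>2 *\<^sub>R k"
    by (simp add: add_ac)
  have "a * a * ghk (x + \<sigma>1 *\<^sub>R h + \<tau>1 *\<^sub>R k) = a * a * gkh (x + \<tau>2 *\<^sub>R h + \<sigma>2 *\<^sub>R k)"
    using s1(5) s2(5)[unfolded swap swap2] by linarith
  then have "ghk (x + \<sigma>1 *\<^sub>R h + \<tau>1 *\<^sub>R k) = gkh (x + \<tau>2 *\<^sub>R h + \<sigma>2 *\<^sub>R k)"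
    using a by simp
  moreover have "dist (ghk (x + \<sigma>1 *\<^sub>R h + \<tau>1 *\<^sub>R k)) (ghk x) < \<epsilon>"
    using d1(2) inW[of \<sigma>1 \<tau>1] near[of \<sigma>1 \<tau>1] s1(1-4) by simp
  moreover have "dist (gkh (x + \<tau>2 *\<^sub>R h + \<sigma>2 *\<^sub>R k)) (gkh x) < \<epsilon>"
    using d2(2) inW[of \<tau>2 \<sigma>2] near[of \<tau>2 \<sigma>2] s2(1-4) by simp
  ultimately have "\<bar>ghk x - gkh x\<bar> < 2 * \<epsilon>"
    unfolding dist_real_def by linarith
  then show False by (simp add: \<epsilon>_def)
qed

lemma smooth_on_has_vector_derivative_dirs:
  assumes "smooth_on S f" "y \<in> S"
  shows "((\<lambda>s. dirs hs f (y + s *\<^sub>R h)) has_vector_derivative dirs (h # hs) f y) (at 0)"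
proof -
  have "(\<lambda>s. dirs hs f (y + s *\<^sub>R h)) differentiable (at 0)"
    using assms unfolding smooth_on_def by blast
  then show ?thesis by (simp add: dd_def vector_derivative_works[symmetric])
qed

lemma smooth_on_continuous_on_dirs: "smooth_on S f \<Longrightarrow> continuous_on S (dirs hs f)"
  unfolding smooth_on_def by blast

lemma smooth_on_dirs_commute:
  fixes f :: "'a::real_normed_vector \<Rightarrow> 'b::euclidean_space"
  assumes f: "smooth_on W f" and x: "x \<in> W"
  shows "dirs [h, k] f x = dirs [k, h] f x"
proof (rule euclidean_eqI)
  fix b :: 'b
  have d: "((\<lambda>s. dirs hs f (y + s *\<^sub>R v) \<bullet> b) has_real_derivative dirs (v # hs) f y \<bullet> b) (at 0)"
    if "y \<in> W" for y v hs
    using bounded_linear.has_vector_derivative[OF bounded_linear_inner_left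
        smooth_on_has_vector_derivative_dirs[OF f that]]
    by (simp add: has_real_derivative_iff_has_vector_derivative)
  have c: "continuous_on W (\<lambda>y. dirs hs f y \<bullet> b)" for hs
    using smooth_on_continuous_on_dirs[OF f] by (intro continuous_intros)
  have "open W" using f unfolding smooth_on_def by blast
  then show "dirs [h, k] f x \<bullet> b = dirs [k, h] f x \<bullet> b"
  proof (rule directional_derivatives_commute_real[OF _ x])
    show "((\<lambda>s. f (y + s *\<^sub>R h) \<bullet> b) has_real_derivative dirs [h] f y \<bullet> b) (at 0)"
      "((\<lambda>s. f (y + s *\<^sub>R k) \<bullet> b) has_real_derivative dirs [k] f y \<bullet> b) (at 0)"
      if "y \<in> W" for y
      using d[where hs = "[]", OF that] by simp_all
    show "((\<lambda>s. dirs [k] f (y + s *\<^sub>R h) \<bullet> b) has_real_derivative dirs [h, k] f y \<bullet> b) (at 0)"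
      "((\<lambda>s. dirs [h] f (y + s *\<^sub>R k) \<bullet> b) has_real_derivative dirs [k, h] f y \<bullet> b) (at 0)"
      if "y \<in> W" for y
      using d[where hs = "[k]", OF that] d[where hs = "[h]", OF that] by simp_all
  qed (rule c)+
qed

section \<open>Partial derivatives along the coordinate axes\<close>

lemma pd_eqI:
  "((\<lambda>s. f (X + s *\<^sub>R axis j 1)) has_vector_derivative D) (at 0) \<Longrightarrow> pd f X j = D"
  by (simp add: pd_def dd_def vector_derivative_at)

lemma pd_eq_0_if_vanishes_on_open:
  assumes "open U" "X \<in> U" "\<And>Y. Y \<in> U \<Longrightarrow> f Y = 0"
  shows "pd f X j = 0"
proof (rule pd_eqI, rule has_vector_derivative_transform_within_open)
  show "((\<lambda>s. 0) has_vector_derivative 0) (at 0)" by simp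
  show "open {s::real. X + s *\<^sub>R axis j 1 \<in> U}" by (rule open_line_preimage[OF assms(1)])
qed (use assms(2,3) in auto)

text \<open>Only partial derivatives along the coordinate axes are required: they are all that the
  divergence and the integration by parts below use.\<close>
definition C1_on :: "vec3 set \<Rightarrow> (vec3 \<Rightarrow> 'b::real_normed_vector) \<Rightarrow> bool" where
  "C1_on \<Omega> f \<longleftrightarrow> continuous_on \<Omega> f \<and> (\<forall>j. continuous_on \<Omega> (\<lambda>X. pd f X j)) \<and>
     (\<forall>X\<in>\<Omega>. \<forall>j. ((\<lambda>s. f (X + s *\<^sub>R axis j 1)) has_vector_derivative pd f X j) (at 0))"

lemma C1_on_continuous_on: "C1_on \<Omega> f \<Longrightarrow> continuous_on \<Omega> f"
  unfolding C1_on_def by blast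

lemma C1_on_continuous_on_pd: "C1_on \<Omega> f \<Longrightarrow> continuous_on \<Omega> (\<lambda>X. pd f X j)"
  unfolding C1_on_def by blast

lemma C1_on_has_vector_derivative_pd:
  "C1_on \<Omega> f \<Longrightarrow> X \<in> \<Omega> \<Longrightarrow> ((\<lambda>s. f (X + s *\<^sub>R axis j 1)) has_vector_derivative pd f X j) (at 0)"
  unfolding C1_on_def by blast

lemma C1_onI:
  assumes f: "continuous_on \<Omega> f" and D: "\<And>j. continuous_on \<Omega> (D j)"
    and der: "\<And>X j. X \<in> \<Omega> \<Longrightarrow> ((\<lambda>s. f (X + s *\<^sub>R axis j 1)) has_vector_derivative D j X) (at 0)"
  shows "C1_on \<Omega> f"
proof -
  have pd: "pd f X j = D j X" if "X \<in> \<Omega>" for X j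
    using pd_eqI[OF der[OF that]] .
  have "continuous_on \<Omega> (\<lambda>X. pd f X j)" for j
    using D by (rule continuous_on_eq) (simp add: pd)
  then show ?thesis
    unfolding C1_on_def using f der by (simp add: pd)
qed

lemma smooth_on_C1_on:
  assumes "smooth_on UNIV f"
  shows "C1_on \<Omega> f"
proof (rule C1_onI[where D = "\<lambda>j. dirs [axis j 1] f"])
  show "continuous_on \<Omega> f" "continuous_on \<Omega> (dirs [axis j 1] f)" for j
    using smooth_on_continuous_on_dirs[OF assms, of "[]"] smooth_on_continuous_on_dirs[OF assms, of "[axis j 1]"]
    by (auto intro: continuous_on_subset)
  show "((\<lambda>s. f (X + s *\<^sub>R axis j 1)) has_vector_derivative dirs [axis j 1] f X) (at 0)" for X j
    using smooth_on_has_vector_derivative_dirs[OF assms UNIV_I, of "[]"] by simp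
qed

lemma C1_on_add:
  assumes "C1_on \<Omega> f" "C1_on \<Omega> g"
  shows "C1_on \<Omega> (\<lambda>X. f X + g X)"
proof (rule C1_onI[where D = "\<lambda>j X. pd f X j + pd g X j"])
  show "continuous_on \<Omega> (\<lambda>X. f X + g X)"
    using C1_on_continuous_on[OF assms(1)] C1_on_continuous_on[OF assms(2)] by (rule continuous_on_add)
  show "continuous_on \<Omega> (\<lambda>X. pd f X j + pd g X j)" for j
    using C1_on_continuous_on_pd[OF assms(1)] C1_on_continuous_on_pd[OF assms(2)] by (rule continuous_on_add)
  show "((\<lambda>s. f (X + s *\<^sub>R axis j 1) + g (X + s *\<^sub>R axis j 1)) has_vector_derivative
      pd f X j + pd g X j) (at 0)" if "X \<in> \<Omega>" for X j
    using assms that by (intro has_vector_derivative_add C1_on_has_vector_derivative_pd)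
qed

lemma pd_add:
  assumes "C1_on \<Omega> f" "C1_on \<Omega> g" "X \<in> \<Omega>"
  shows "pd (\<lambda>X. f X + g X) X j = pd f X j + pd g X j"
  using assms by (intro pd_eqI has_vector_derivative_add C1_on_has_vector_derivative_pd)

lemma pd_bilinear:
  assumes b: "bounded_bilinear b" and f: "C1_on \<Omega> f" and g: "C1_on \<Omega> g" and X: "X \<in> \<Omega>"
  shows "pd (\<lambda>X. b (f X) (g X)) X j = b (f X) (pd g X j) + b (pd f X j) (g X)"
  using bounded_bilinear.has_vector_derivative[OF b C1_on_has_vector_derivative_pd[OF f X]
      C1_on_has_vector_derivative_pd[OF g X]]
  by (intro pd_eqI) simp

lemma C1_on_bilinear:
  assumes b: "bounded_bilinear b" and f: "C1_on \<Omega> f" and g: "C1_on \<Omega> g"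
  shows "C1_on \<Omega> (\<lambda>X. b (f X) (g X))"
proof (rule C1_onI[where D = "\<lambda>j X. b (f X) (pd g X j) + b (pd f X j) (g X)"])
  note cont = C1_on_continuous_on[OF f] C1_on_continuous_on[OF g]
    C1_on_continuous_on_pd[OF f] C1_on_continuous_on_pd[OF g]
  show "continuous_on \<Omega> (\<lambda>X. b (f X) (g X))"
    using cont by (intro bounded_bilinear.continuous_on[OF b])
  show "continuous_on \<Omega> (\<lambda>X. b (f X) (pd g X j) + b (pd f X j) (g X))" for j
    using cont by (intro continuous_on_add bounded_bilinear.continuous_on[OF b])
  show "((\<lambda>s. b (f (X + s *\<^sub>R axis j 1)) (g (X + s *\<^sub>R axis j 1))) has_vector_derivative
      b (f X) (pd g X j) + b (pd f X j) (g X)) (at 0)" if "X \<in> \<Omega>" for X j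
    using bounded_bilinear.has_vector_derivative[OF b C1_on_has_vector_derivative_pd[OF f that]
        C1_on_has_vector_derivative_pd[OF g that]] by simp
qed

definition divergence :: "(vec3 \<Rightarrow> vec3) \<Rightarrow> vec3 \<Rightarrow> real" where
  "divergence f X = (\<Sum>j\<in>UNIV. pd f X j $ j)"

lemma continuous_on_Grad: "C1_on \<Omega> w \<Longrightarrow> continuous_on \<Omega> (Grad w)"
  unfolding Grad_def[abs_def] by (intro continuous_intros C1_on_continuous_on_pd)

lemma continuous_on_Div: "C1_on \<Omega> A \<Longrightarrow> continuous_on \<Omega> (Div A)"
  unfolding Div_def[abs_def] by (intro continuous_intros C1_on_continuous_on_pd)

lemma Div_add:
  assumes "C1_on \<Omega> A" "C1_on \<Omega> B" "X \<in> \<Omega>"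
  shows "Div (\<lambda>Y. A Y + B Y) X = Div A X + Div B X"
  unfolding Div_def by (simp add: pd_add[OF assms] vec_eq_iff sum.distrib)

lemma divergence_vector_matrix_mult:
  assumes "C1_on \<Omega> w" "C1_on \<Omega> T" "X \<in> \<Omega>"
  shows "divergence (\<lambda>Y. w Y v* T Y) X = w X \<bullet> Div T X + ddot (Grad w X) (T X)"
proof -
  have "pd (\<lambda>Y. w Y v* T Y) X j = w X v* pd T X j + pd w X j v* T X" for j
    by (rule pd_bilinear[OF bounded_bilinear_vector_matrix_mult assms])
  then have "divergence (\<lambda>Y. w Y v* T Y) X
      = (\<Sum>j\<in>UNIV. \<Sum>i\<in>UNIV. w X $ i * pd T X j $ i $ j) + (\<Sum>j\<in>UNIV. \<Sum>i\<in>UNIV. pd w X j $ i * T X $ i $ j)"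
    unfolding divergence_def by (simp add: vector_matrix_mult_def sum.distrib)
  also have "(\<Sum>j\<in>UNIV. \<Sum>i\<in>UNIV. w X $ i * pd T X j $ i $ j)
      = (\<Sum>i\<in>UNIV. \<Sum>j\<in>UNIV. w X $ i * pd T X j $ i $ j)"
    by (rule sum.swap)
  also have "\<dots> = w X \<bullet> Div T X"
    unfolding Div_def inner_vec_def by (simp add: sum_distrib_left)
  also have "(\<Sum>j\<in>UNIV. \<Sum>i\<in>UNIV. pd w X j $ i * T X $ i $ j)
      = (\<Sum>i\<in>UNIV. \<Sum>j\<in>UNIV. pd w X j $ i * T X $ i $ j)"
    by (rule sum.swap)
  also have "\<dots> = ddot (Grad w X) (T X)"
    unfolding ddot_def Grad_def by simp
  finally show ?thesis .
qed

section \<open>Integrals of derivatives of compactly supported functions\<close>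

lemma integral_UNIV_eq_cbox:
  fixes f :: "'a::euclidean_space \<Rightarrow> real"
  assumes "continuous_on (cbox a b) f" "\<And>x. x \<notin> cbox a b \<Longrightarrow> f x = 0"
  shows "integral UNIV f = integral (cbox a b) f"
  using has_integral_on_superset[OF integrable_integral[OF integrable_continuous[OF assms(1)]] assms(2)]
  by (simp add: integral_unique)

lemma integral_translate_compact_support:
  fixes G :: "'a::euclidean_space \<Rightarrow> real"
  assumes G: "continuous_on UNIV G" and K: "compact K" and G0: "\<And>x. x \<notin> K \<Longrightarrow> G x = 0"
  shows "integral UNIV (\<lambda>x. G (x + c)) = integral UNIV G"
proof -
  have "compact (K \<union> (\<lambda>x. x - c) ` K)"
    using K by (intro compact_Un compact_continuous_image continuous_intros)
  then obtain a b where box: "K \<union> (\<lambda>x. x - c) ` K \<subseteq> cbox a b"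
    using bounded_subset_cbox_symmetric compact_imp_bounded by metis
  have "integral UNIV (\<lambda>x. G (x + c)) = integral (cbox a b) (\<lambda>x. G (x + c))"
  proof (rule integral_UNIV_eq_cbox)
    show "continuous_on (cbox a b) (\<lambda>x. G (x + c))"
      by (intro continuous_on_compose2[OF G] continuous_intros) auto
    show "G (x + c) = 0" if "x \<notin> cbox a b" for x
    proof (rule G0, rule notI)
      assume "x + c \<in> K"
      then have "(x + c) - c \<in> cbox a b" using box by blast
      then show False using that by simp
    qed
  qed
  also have "\<dots> = integral (cbox (a + c) (b + c)) G"
    using integral_shift_cbox_plus[of a b G c] by (simp add: o_def add.commute)
  also have "\<dots> = integral UNIV G"
  proof (rule integral_UNIV_eq_cbox[symmetric])
    show "continuous_on (cbox (a + c) (b + c)) G"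
      using G by (rule continuous_on_subset) simp
    show "G x = 0" if "x \<notin> cbox (a + c) (b + c)" for x
    proof (rule G0, rule notI)
      assume "x \<in> K"
      then have "x - c \<in> cbox a b" using box by blast
      then show False using that by (auto simp: mem_box inner_diff_left inner_add_left)
    qed
  qed
  finally show ?thesis .
qed

lemma has_real_derivative_integral_translate:
  fixes G DG :: "'a::euclidean_space \<Rightarrow> real"
  assumes G: "continuous_on UNIV G" and DG: "continuous_on UNIV DG"
    and der: "\<And>x. ((\<lambda>s. G (x + s *\<^sub>R e)) has_real_derivative DG x) (at 0)"
  shows "((\<lambda>s. integral (cbox a b) (\<lambda>x. G (x + s *\<^sub>R e))) has_real_derivative integral (cbox a b) DG) (at 0)"
proof -
  have "((\<lambda>s. integral (cbox a b) (\<lambda>x. G (x + s *\<^sub>R e))) has_field_derivative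
      integral (cbox a b) (\<lambda>x. DG (x + 0 *\<^sub>R e))) (at 0 within UNIV)"
  proof (rule leibniz_rule_field_derivative[where fx = "\<lambda>s x. DG (x + s *\<^sub>R e)"])
    show "((\<lambda>s. G (x + s *\<^sub>R e)) has_field_derivative DG (x + s0 *\<^sub>R e)) (at s0 within UNIV)" for x s0
      using has_real_derivative_line_shift[OF der] by simp
    show "(\<lambda>x. G (x + s *\<^sub>R e)) integrable_on cbox a b" for s
      by (intro integrable_continuous continuous_on_compose2[OF G] continuous_intros) auto
    show "continuous_on (UNIV \<times> cbox a b) (\<lambda>(s, x). DG (x + s *\<^sub>R e))"
      by (auto simp: case_prod_beta intro!: continuous_on_compose2[OF DG] continuous_intros)
  qed auto
  then show ?thesis by simp
qed

text \<open>By translation invariance \<open>s \<mapsto> \<integral> G(x + s e) dx\<close> is constant, while differentiating under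
  the integral sign over a box containing all translates with \<open>|s| \<le> 1\<close> gives \<open>\<integral> DG\<close> as its derivative.\<close>
lemma integral_directional_derivative_eq_0_UNIV:
  fixes G DG :: "'a::euclidean_space \<Rightarrow> real"
  assumes K: "compact K" and G: "continuous_on UNIV G" and DG: "continuous_on UNIV DG"
    and G0: "\<And>x. x \<notin> K \<Longrightarrow> G x = 0" and DG0: "\<And>x. x \<notin> K \<Longrightarrow> DG x = 0"
    and der: "\<And>x. ((\<lambda>s. G (x + s *\<^sub>R e)) has_real_derivative DG x) (at 0)"
  shows "integral UNIV DG = 0"
proof -
  have "compact ((\<lambda>p. fst p - snd p *\<^sub>R e) ` (K \<times> {-1..1}))"
    using K by (intro compact_continuous_image compact_Times compact_Icc continuous_intros)
  then obtain a b where box: "(\<lambda>p. fst p - snd p *\<^sub>R e) ` (K \<times> {-1..1}) \<subseteq> cbox a b"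
    using bounded_subset_cbox_symmetric compact_imp_bounded by metis
  have out: "G (x + s *\<^sub>R e) = 0" if "x \<notin> cbox a b" "\<bar>s\<bar> \<le> 1" for x s
  proof (rule G0, rule notI)
    assume "x + s *\<^sub>R e \<in> K"
    then have "fst (x + s *\<^sub>R e, s) - snd (x + s *\<^sub>R e, s) *\<^sub>R e \<in> cbox a b"
      using box that(2) by (intro subsetD[OF box] imageI) auto
    then show False using that(1) by simp
  qed
  have "integral (cbox a b) (\<lambda>x. G (x + s *\<^sub>R e)) = integral UNIV G" if "s \<in> {-1<..<1}" for s
  proof -
    have "integral (cbox a b) (\<lambda>x. G (x + s *\<^sub>R e)) = integral UNIV (\<lambda>x. G (x + s *\<^sub>R e))"
      using that out by (intro integral_UNIV_eq_cbox[symmetric] continuous_on_compose2[OF G]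
          continuous_intros) auto
    also have "\<dots> = integral UNIV G"
      by (rule integral_translate_compact_support[OF G K G0])
    finally show ?thesis .
  qed
  then have "((\<lambda>s. integral (cbox a b) (\<lambda>x. G (x + s *\<^sub>R e))) has_real_derivative 0) (at 0)"
    by (intro has_field_derivative_transform_within_open[OF DERIV_const, of "{-1<..<1}"]) auto
  then have "integral (cbox a b) DG = 0"
    using DERIV_unique has_real_derivative_integral_translate[OF G DG der] by blast
  moreover have "K \<subseteq> cbox a b"
  proof
    fix x assume "x \<in> K"
    then have "fst (x, 0::real) - snd (x, 0::real) *\<^sub>R e \<in> cbox a b"
      by (intro subsetD[OF box] imageI) auto
    then show "x \<in> cbox a b" by simp
  qed
  then have "integral UNIV DG = integral (cbox a b) DG"
    using DG0 by (intro integral_UNIV_eq_cbox continuous_on_subset[OF DG]) auto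
  ultimately show ?thesis by simp
qed

lemma continuous_on_extend_by_0:
  fixes f :: "'a::topological_space \<Rightarrow> 'b::real_normed_vector"
  assumes "open \<Omega>" "closed K" "K \<subseteq> \<Omega>" "continuous_on \<Omega> f"
    and "\<And>x. x \<in> \<Omega> \<Longrightarrow> x \<notin> K \<Longrightarrow> f x = 0"
  shows "continuous_on UNIV (\<lambda>x. if x \<in> \<Omega> then f x else 0)"
proof -
  have "continuous_on (\<Omega> \<union> - K) (\<lambda>x. if x \<in> \<Omega> then f x else 0)"
  proof (rule continuous_on_open_Un)
    show "continuous_on \<Omega> (\<lambda>x. if x \<in> \<Omega> then f x else 0)"
      using assms(4) by (rule continuous_on_eq) auto
    show "continuous_on (- K) (\<lambda>x. if x \<in> \<Omega> then f x else 0)"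
      by (rule continuous_on_eq[OF continuous_on_const[of _ 0]]) (use assms(5) in auto)
  qed (use assms(1,2) in auto)
  moreover have "\<Omega> \<union> - K = UNIV" using assms(3) by auto
  ultimately show ?thesis by simp
qed

lemma integrable_on_compact_support:
  fixes f :: "'a::euclidean_space \<Rightarrow> real"
  assumes \<Omega>: "open \<Omega>" and K: "compact K" "K \<subseteq> \<Omega>" and f: "continuous_on \<Omega> f"
    and f0: "\<And>x. x \<in> \<Omega> \<Longrightarrow> x \<notin> K \<Longrightarrow> f x = 0"
  shows "f integrable_on \<Omega>"
proof -
  obtain a b where box: "K \<subseteq> cbox a b"
    using K(1) bounded_subset_cbox_symmetric compact_imp_bounded by metis
  have "(\<lambda>x. if x \<in> \<Omega> then f x else 0) integrable_on cbox a b"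
    using continuous_on_extend_by_0[OF \<Omega> compact_imp_closed[OF K(1)] K(2) f f0]
    by (intro integrable_continuous) (rule continuous_on_subset, auto)
  then have "(\<lambda>x. if x \<in> \<Omega> then f x else 0) integrable_on UNIV"
    by (rule integrable_on_superset) (use box f0 in auto)
  then show ?thesis by (simp add: integrable_restrict_UNIV)
qed

lemma integrable_on_continuous_on_closure:
  fixes f :: "'a::euclidean_space \<Rightarrow> real"
  assumes "open \<Omega>" "bounded \<Omega>" "continuous_on (closure \<Omega>) f"
  shows "f integrable_on \<Omega>"
proof -
  have "compact (f ` closure \<Omega>)"
    using assms by (intro compact_continuous_image) auto
  then obtain M where M: "\<And>x. x \<in> closure \<Omega> \<Longrightarrow> \<bar>f x\<bar> \<le> M"
    using compact_imp_bounded bounded_real by (metis image_eqI)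
  have \<Omega>: "\<Omega> \<in> lmeasurable" by (rule lmeasurable_open[OF assms(2,1)])
  show ?thesis
  proof (rule measurable_bounded_by_integrable_imp_integrable_real[of f \<Omega> "\<lambda>x. M"])
    show "f \<in> borel_measurable (lebesgue_on \<Omega>)"
      using assms(3) closure_subset \<Omega>
      by (intro continuous_imp_measurable_on_sets_lebesgue) (auto intro: continuous_on_subset)
    show "(\<lambda>x. M) integrable_on \<Omega>" by (rule integrable_on_const[OF \<Omega>])
  qed (use M closure_subset \<Omega> in auto)
qed

lemma has_real_derivative_extend_by_0:
  fixes g Dg :: "'a::real_normed_vector \<Rightarrow> real"
  assumes \<Omega>: "open \<Omega>" and K: "closed K" "K \<subseteq> \<Omega>"
    and g0: "\<And>x. x \<in> \<Omega> \<Longrightarrow> x \<notin> K \<Longrightarrow> g x = 0"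
    and der: "\<And>x. x \<in> \<Omega> \<Longrightarrow> ((\<lambda>s. g (x + s *\<^sub>R e)) has_real_derivative Dg x) (at 0)"
  shows "((\<lambda>s. if x + s *\<^sub>R e \<in> \<Omega> then g (x + s *\<^sub>R e) else 0) has_real_derivative
      (if x \<in> \<Omega> then Dg x else 0)) (at 0)"
proof (cases "x \<in> \<Omega>")
  case True
  have "((\<lambda>s. if x + s *\<^sub>R e \<in> \<Omega> then g (x + s *\<^sub>R e) else 0) has_real_derivative Dg x) (at 0)"
  proof (rule has_field_derivative_transform_within_open[OF der[OF True] open_line_preimage[OF \<Omega>]])
    show "g (x + s *\<^sub>R e) = (if x + s *\<^sub>R e \<in> \<Omega> then g (x + s *\<^sub>R e) else 0)"
      if "s \<in> {s. x + s *\<^sub>R e \<in> \<Omega>}" for s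
      using that by simp
  qed (use True in simp)
  then show ?thesis using True by simp
next
  case False
  then have "x \<notin> K" using K by auto
  have "((\<lambda>s. if x + s *\<^sub>R e \<in> \<Omega> then g (x + s *\<^sub>R e) else 0) has_real_derivative 0) (at 0)"
  proof (rule has_field_derivative_transform_within_open[OF DERIV_const open_line_preimage])
    show "open (- K)" using K(1) by (simp add: open_Compl)
    show "0 = (if x + s *\<^sub>R e \<in> \<Omega> then g (x + s *\<^sub>R e) else 0)"
      if "s \<in> {s. x + s *\<^sub>R e \<in> - K}" for s
      using that g0 by simp
  qed (use \<open>x \<notin> K\<close> in simp)
  then show ?thesis using False by simp
qed

lemma integral_directional_derivative_eq_0:
  fixes g Dg :: "'a::euclidean_space \<Rightarrow> real"
  assumes \<Omega>: "open \<Omega>" and K: "compact K" "K \<subseteq> \<Omega>"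
    and g: "continuous_on \<Omega> g" and Dg: "continuous_on \<Omega> Dg"
    and g0: "\<And>x. x \<in> \<Omega> \<Longrightarrow> x \<notin> K \<Longrightarrow> g x = 0" and Dg0: "\<And>x. x \<in> \<Omega> \<Longrightarrow> x \<notin> K \<Longrightarrow> Dg x = 0"
    and der: "\<And>x. x \<in> \<Omega> \<Longrightarrow> ((\<lambda>s. g (x + s *\<^sub>R e)) has_real_derivative Dg x) (at 0)"
  shows "integral \<Omega> Dg = 0"
proof -
  define G where "G x = (if x \<in> \<Omega> then g x else 0)" for x
  define DG where "DG x = (if x \<in> \<Omega> then Dg x else 0)" for x
  have G0: "G x = 0" if "x \<notin> K" for x using that g0 by (auto simp: G_def)
  have der_G: "((\<lambda>s. G (x + s *\<^sub>R e)) has_real_derivative DG x) (at 0)" for x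
    unfolding G_def DG_def
    by (rule has_real_derivative_extend_by_0[OF \<Omega> compact_imp_closed[OF K(1)] K(2) g0 der])
  have "integral UNIV DG = 0"
  proof (rule integral_directional_derivative_eq_0_UNIV[OF K(1) _ _ G0 _ der_G])
    show "continuous_on UNIV G"
      unfolding G_def by (rule continuous_on_extend_by_0[OF \<Omega> compact_imp_closed[OF K(1)] K(2) g g0])
    show "continuous_on UNIV DG"
      unfolding DG_def by (rule continuous_on_extend_by_0[OF \<Omega> compact_imp_closed[OF K(1)] K(2) Dg Dg0])
    show "DG x = 0" if "x \<notin> K" for x
      using that Dg0 by (simp add: DG_def)
  qed
  then show ?thesis
    unfolding DG_def[abs_def] by (simp add: integral_restrict_UNIV)
qed

lemma has_integral_divergence_0:
  assumes \<Omega>: "open \<Omega>" and K: "compact K" "K \<subseteq> \<Omega>" and f: "C1_on \<Omega> f"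
    and f0: "\<And>X. X \<in> \<Omega> \<Longrightarrow> X \<notin> K \<Longrightarrow> f X = 0"
  shows "(divergence f has_integral 0) \<Omega>"
proof -
  have pd0: "pd f X j = 0" if "X \<in> \<Omega>" "X \<notin> K" for X j
    using that f0 \<Omega> K(1)
    by (intro pd_eq_0_if_vanishes_on_open[of "\<Omega> - K"]) (auto intro: open_Diff compact_imp_closed)
  have "((\<lambda>X. pd f X j $ j) has_integral 0) \<Omega>" for j
  proof -
    have cont: "continuous_on \<Omega> (\<lambda>X. pd f X j $ j)"
      using C1_on_continuous_on_pd[OF f] by (rule continuous_on_component)
    have "integral \<Omega> (\<lambda>X. pd f X j $ j) = 0"
    proof (rule integral_directional_derivative_eq_0[OF \<Omega> K _ cont, where g = "\<lambda>X. f X $ j" and e = "axis j 1"])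
      show "continuous_on \<Omega> (\<lambda>X. f X $ j)"
        using C1_on_continuous_on[OF f] by (rule continuous_on_component)
      show "((\<lambda>s. f (X + s *\<^sub>R axis j 1) $ j) has_real_derivative pd f X j $ j) (at 0)" if "X \<in> \<Omega>" for X
        using bounded_linear.has_vector_derivative[OF bounded_linear_vec_nth
            C1_on_has_vector_derivative_pd[OF f that]]
        by (simp add: has_real_derivative_iff_has_vector_derivative)
    qed (use f0 pd0 in auto)
    moreover have "(\<lambda>X. pd f X j $ j) integrable_on \<Omega>"
      using pd0 by (intro integrable_on_compact_support[OF \<Omega> K cont]) auto
    ultimately show ?thesis by (metis integrable_integral)
  qed
  then show ?thesis
    unfolding divergence_def[abs_def] using has_integral_sum[of UNIV "\<lambda>j X. pd f X j $ j" "\<lambda>j. 0" \<Omega>]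
    by simp
qed

section \<open>Kinematics of a smooth displacement field\<close>

context
  fixes u :: "vec3 \<Rightarrow> real \<Rightarrow> vec3" and W :: "(vec3 \<times> real) set"
  assumes smooth_u: "smooth_on W (\<lambda>(X, t). u X t)"
begin

abbreviation disp :: "vec3 \<times> real \<Rightarrow> vec3" where
  "disp \<equiv> \<lambda>(X, t). u X t"

lemma open_domain: "open W"
  using smooth_u unfolding smooth_on_def by blast

lemma has_vector_derivative_dirs_space:
  assumes "(Y, t) \<in> W"
  shows "((\<lambda>r. dirs hs disp (Y + r *\<^sub>R v, t)) has_vector_derivative dirs ((v, 0) # hs) disp (Y, t)) (at 0)"
  using smooth_on_has_vector_derivative_dirs[OF smooth_u assms, of hs "(v, 0)"] by simp

lemma has_vector_derivative_dirs_time: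
  assumes "(X, t) \<in> W"
  shows "((\<lambda>s. dirs hs disp (X, s)) has_vector_derivative dirs ((0, 1) # hs) disp (X, t)) (at t)"
proof -
  have "((\<lambda>s. dirs hs disp (X, t + s)) has_vector_derivative dirs ((0, 1) # hs) disp (X, t)) (at 0)"
    using smooth_on_has_vector_derivative_dirs[OF smooth_u assms, of hs "(0, 1)"] by simp
  then have "((\<lambda>s. dirs hs disp (X, t + s)) \<circ> (\<lambda>s. s - t) has_vector_derivative
      1 *\<^sub>R dirs ((0, 1) # hs) disp (X, t)) (at t)"
    by (intro vector_diff_chain_at) (auto intro!: derivative_eq_intros)
  then show ?thesis by (simp add: o_def)
qed

lemma continuous_on_dirs_slice:
  assumes "\<And>Y. Y \<in> S \<Longrightarrow> (Y, t) \<in> W"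
  shows "continuous_on S (\<lambda>Y. dirs hs disp (Y, t))"
  by (rule continuous_on_compose2[OF smooth_on_continuous_on_dirs[OF smooth_u]])
    (auto intro!: continuous_intros assms)

lemma vel_eq_dirs:
  assumes "(X, t) \<in> W"
  shows "vel u X t = dirs [(0, 1)] disp (X, t)"
  using has_vector_derivative_dirs_time[OF assms, of "[]"]
  by (simp add: vel_def tder_def vector_derivative_at)

lemma has_vector_derivative_vel:
  assumes "(X, t) \<in> W"
  shows "(vel u X has_vector_derivative dirs [(0, 1), (0, 1)] disp (X, t)) (at t)"
proof (rule has_vector_derivative_transform_within_open[OF has_vector_derivative_dirs_time[OF assms]])
  show "open {s. (X, s) \<in> W}"
    using open_line_preimage[OF open_domain, of "(X, 0)" "(0, 1)"] by simp
  show "dirs [(0, 1)] disp (X, s) = vel u X s" if "s \<in> {s. (X, s) \<in> W}" for s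
    using vel_eq_dirs that by simp
qed (use assms in simp)

lemma defgrad_eq_dirs: "defgrad u X s = mat 1 + transpose (\<chi> j. dirs [(axis j 1, 0)] disp (X, s))"
  unfolding defgrad_def Grad_def by (simp add: pd_def dd_def transpose_def)

lemma Grad_vel_eq_dirs:
  assumes "(X, t) \<in> W"
  shows "Grad (\<lambda>Y. vel u Y t) X = transpose (\<chi> j. dirs [(axis j 1, 0), (0, 1)] disp (X, t))"
proof -
  have "pd (\<lambda>Y. vel u Y t) X j = dirs [(axis j 1, 0), (0, 1)] disp (X, t)" for j
  proof (rule pd_eqI, rule has_vector_derivative_transform_within_open[OF
        has_vector_derivative_dirs_space[OF assms]])
    show "open {r. (X + r *\<^sub>R axis j 1, t) \<in> W}"
      using open_line_preimage[OF open_domain, of "(X, t)" "(axis j 1, 0)"] by simp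
    show "dirs [(0, 1)] disp (X + r *\<^sub>R axis j 1, t) = vel u (X + r *\<^sub>R axis j 1) t"
      if "r \<in> {r. (X + r *\<^sub>R axis j 1, t) \<in> W}" for r
      using vel_eq_dirs that by simp
  qed (use assms in simp)
  then show ?thesis unfolding Grad_def transpose_def by simp
qed

lemma has_vector_derivative_defgrad:
  assumes "(X, t) \<in> W"
  shows "(defgrad u X has_vector_derivative Grad (\<lambda>Y. vel u Y t) X) (at t)"
proof -
  have "((\<lambda>s. mat 1 + transpose (\<chi> j. dirs [(axis j 1, 0)] disp (X, s))) has_vector_derivative
      transpose (\<chi> j. dirs [(0, 1), (axis j 1, 0)] disp (X, t))) (at t)"
    by (rule has_vector_derivative_eq_rhs[OF has_vector_derivative_add[OF has_vector_derivative_const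
          has_vector_derivative_transpose[OF has_vector_derivative_vec_lambda[OF
          has_vector_derivative_dirs_time[OF assms]]]]]) simp
  moreover have "dirs [(0, 1), (axis j 1, 0)] disp (X, t) = dirs [(axis j 1, 0), (0, 1)] disp (X, t)" for j
    by (rule smooth_on_dirs_commute[OF smooth_u assms])
  moreover have "defgrad u X = (\<lambda>s. mat 1 + transpose (\<chi> j. dirs [(axis j 1, 0)] disp (X, s)))"
    using defgrad_eq_dirs by blast
  ultimately show ?thesis by (simp add: Grad_vel_eq_dirs[OF assms])
qed

lemma has_vector_derivative_green:
  assumes "(X, t) \<in> W"
  shows "(green u X has_vector_derivative aop (\<lambda>Y. defgrad u Y t) (\<lambda>Y. vel u Y t) X) (at t)"
  using has_vector_derivative_green_strain[OF has_vector_derivative_defgrad[OF assms]]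
  by (simp add: green_def[abs_def] aop_def)

lemma continuous_on_vel:
  assumes "\<And>Y. Y \<in> S \<Longrightarrow> (Y, t) \<in> W"
  shows "continuous_on S (\<lambda>Y. vel u Y t)"
proof (rule continuous_on_eq[OF continuous_on_dirs_slice[OF assms, where hs = "[(0, 1)]"]])
  show "dirs [(0, 1)] disp (Y, t) = vel u Y t" if "Y \<in> S" for Y
    using vel_eq_dirs[OF assms[OF that]] by simp
qed

lemma continuous_on_defgrad:
  assumes "\<And>Y. Y \<in> S \<Longrightarrow> (Y, t) \<in> W"
  shows "continuous_on S (\<lambda>Y. defgrad u Y t)"
  unfolding defgrad_eq_dirs by (intro continuous_intros continuous_on_dirs_slice assms)

lemma continuous_on_green:
  assumes "\<And>Y. Y \<in> S \<Longrightarrow> (Y, t) \<in> W"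
  shows "continuous_on S (\<lambda>Y. green u Y t)"
  unfolding green_def by (intro continuous_intros continuous_on_defgrad assms)

lemma C1_on_defgrad:
  assumes "\<And>Y. Y \<in> \<Omega> \<Longrightarrow> (Y, t) \<in> W"
  shows "C1_on \<Omega> (\<lambda>Y. defgrad u Y t)"
proof (rule C1_onI[where D = "\<lambda>j Y. transpose (\<chi> b. dirs [(axis j 1, 0), (axis b 1, 0)] disp (Y, t))"])
  show "continuous_on \<Omega> (\<lambda>Y. defgrad u Y t)"
    by (rule continuous_on_defgrad[OF assms])
  show "continuous_on \<Omega> (\<lambda>Y. transpose (\<chi> b. dirs [(axis j 1, 0), (axis b 1, 0)] disp (Y, t)))" for j
    by (intro continuous_intros continuous_on_dirs_slice assms)
  show "((\<lambda>r. defgrad u (Y + r *\<^sub>R axis j 1) t) has_vector_derivative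
      transpose (\<chi> b. dirs [(axis j 1, 0), (axis b 1, 0)] disp (Y, t))) (at 0)" if "Y \<in> \<Omega>" for Y j
    unfolding defgrad_eq_dirs
    by (rule has_vector_derivative_eq_rhs[OF has_vector_derivative_add[OF has_vector_derivative_const
          has_vector_derivative_transpose[OF has_vector_derivative_vec_lambda[OF
          has_vector_derivative_dirs_space[OF assms[OF that]]]]]]) simp
qed

lemma evolution_equations:
  assumes "(X, t) \<in> W"
    and balance: "rho0 *\<^sub>R tder (vel u X) t = Div (\<lambda>Y. defgrad u Y t ** PK2 mu lam u Y t) X"
  shows "(tder (mom rho0 u X) t, tder (green u X) t, tder (defgrad u X) t)
       = evalT (Jop (\<lambda>Y. defgrad u Y t) (\<lambda>Y. vel u Y t, \<lambda>Y. PK2 mu lam u Y t, \<lambda>Y. 0)) X"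
proof -
  have "(mom rho0 u X has_vector_derivative rho0 *\<^sub>R tder (vel u X) t) (at t)"
    using bounded_linear.has_vector_derivative[OF bounded_linear_scaleR_right
        has_vector_derivative_vel[OF assms(1)]]
    by (simp add: mom_def[abs_def] tder_def vector_derivative_at[OF has_vector_derivative_vel[OF assms(1)]])
  moreover have "Div (\<lambda>Y. 0::ten3) X = 0"
    by (simp add: Div_def pd_def dd_def vec_eq_iff)
  ultimately show ?thesis
    using balance vector_derivative_at[OF has_vector_derivative_green[OF assms(1)]]
      vector_derivative_at[OF has_vector_derivative_defgrad[OF assms(1)]]
    by (simp add: tder_def evalT_def Jop_def vector_derivative_at)
qed

end

section \<open>Variational derivatives of the Hamiltonian\<close>

lemma has_real_derivative_half_integral_quadratic:
  fixes a b c :: "'a::euclidean_space \<Rightarrow> real"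
  assumes "a integrable_on \<Omega>" "b integrable_on \<Omega>" "c integrable_on \<Omega>"
  shows "((\<lambda>\<epsilon>. (1/2) * integral \<Omega> (\<lambda>X. a X + 2 * \<epsilon> * b X + \<epsilon>\<^sup>2 * c X))
           has_real_derivative integral \<Omega> b) (at 0)"
proof -
  have "integral \<Omega> (\<lambda>X. a X + 2 * \<epsilon> * b X + \<epsilon>\<^sup>2 * c X)
      = integral \<Omega> a + 2 * \<epsilon> * integral \<Omega> b + \<epsilon>\<^sup>2 * integral \<Omega> c" for \<epsilon>
  proof -
    have "(\<lambda>X. 2 * \<epsilon> * b X) integrable_on \<Omega>" "(\<lambda>X. \<epsilon>\<^sup>2 * c X) integrable_on \<Omega>"
      by (rule integrable_on_mult_right[OF assms(2)], rule integrable_on_mult_right[OF assms(3)])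
    then show ?thesis
      using assms(1) by (simp add: integral_add integrable_add)
  qed
  then show ?thesis by (auto intro!: derivative_eq_intros)
qed

lemma test_field_continuous_on: "test_field \<Omega> f \<Longrightarrow> continuous_on S f"
  unfolding test_field_def using smooth_on_continuous_on_dirs[of UNIV f "[]"]
  by (auto intro: continuous_on_subset)

lemma is_vd_p_Ham:
  assumes \<Omega>: "open \<Omega>" "bounded \<Omega>" and rho: "rho0 \<noteq> 0"
    and v: "continuous_on (closure \<Omega>) v" and E: "continuous_on (closure \<Omega>) E"
  shows "is_vd_p \<Omega> (Ham rho0 mu lam \<Omega>) (\<lambda>X. rho0 *\<^sub>R v X) E F v"
  unfolding is_vd_p_def
proof (intro allI impI)
  fix \<delta> :: "vec3 \<Rightarrow> vec3"
  assume "test_field \<Omega> \<delta>"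
  then have \<delta>: "continuous_on (closure \<Omega>) \<delta>" by (rule test_field_continuous_on)
  define a where "a X = (1/rho0) * ((rho0 *\<^sub>R v X) \<bullet> (rho0 *\<^sub>R v X)) + ddot (E X) (elast mu lam (E X))" for X
  have expand: "(1/rho0) * ((rho0 *\<^sub>R x + \<epsilon> *\<^sub>R y) \<bullet> (rho0 *\<^sub>R x + \<epsilon> *\<^sub>R y))
      = (1/rho0) * ((rho0 *\<^sub>R x) \<bullet> (rho0 *\<^sub>R x)) + 2 * \<epsilon> * (x \<bullet> y) + \<epsilon>\<^sup>2 * ((1/rho0) * (y \<bullet> y))"
    for x y :: vec3 and \<epsilon>
    using rho by (simp add: inner_add_left inner_add_right inner_commute[of y x] power2_eq_square field_simps)
  have "(\<lambda>\<epsilon>. Ham rho0 mu lam \<Omega> (\<lambda>X. rho0 *\<^sub>R v X + \<epsilon> *\<^sub>R \<delta> X) E F)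
      = (\<lambda>\<epsilon>. (1/2) * integral \<Omega> (\<lambda>X. a X + 2 * \<epsilon> * (v X \<bullet> \<delta> X) + \<epsilon>\<^sup>2 * ((1/rho0) * (\<delta> X \<bullet> \<delta> X))))"
    unfolding Ham_def expand a_def by (simp add: add_ac)
  then show "((\<lambda>\<epsilon>. Ham rho0 mu lam \<Omega> (\<lambda>X. rho0 *\<^sub>R v X + \<epsilon> *\<^sub>R \<delta> X) E F)
      has_real_derivative integral \<Omega> (\<lambda>X. v X \<bullet> \<delta> X)) (at 0)"
    unfolding a_def
    by (simp only:) (intro has_real_derivative_half_integral_quadratic
        integrable_on_continuous_on_closure[OF \<Omega>] continuous_intros v E \<delta>)
qed

lemma is_vd_E_Ham:
  assumes \<Omega>: "open \<Omega>" "bounded \<Omega>"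
    and p: "continuous_on (closure \<Omega>) p" and E: "continuous_on (closure \<Omega>) E"
  shows "is_vd_E \<Omega> (Ham rho0 mu lam \<Omega>) p E F (\<lambda>X. elast mu lam (E X))"
  unfolding is_vd_E_def
proof (intro allI impI)
  fix \<delta> :: "vec3 \<Rightarrow> ten3"
  assume "test_sym \<Omega> \<delta>"
  then have \<delta>: "continuous_on (closure \<Omega>) \<delta>"
    unfolding test_sym_def by (blast intro: test_field_continuous_on)
  define a where "a X = (1/rho0) * (p X \<bullet> p X) + ddot (E X) (elast mu lam (E X))" for X
  have "(\<lambda>\<epsilon>. Ham rho0 mu lam \<Omega> p (\<lambda>X. E X + \<epsilon> *\<^sub>R \<delta> X) F)
      = (\<lambda>\<epsilon>. (1/2) * integral \<Omega> (\<lambda>X. a X + 2 * \<epsilon> * ddot (elast mu lam (E X)) (\<delta> X)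
          + \<epsilon>\<^sup>2 * ddot (\<delta> X) (elast mu lam (\<delta> X))))"
    unfolding Ham_def a_def ddot_elast_quadratic by (simp add: algebra_simps)
  then show "((\<lambda>\<epsilon>. Ham rho0 mu lam \<Omega> p (\<lambda>X. E X + \<epsilon> *\<^sub>R \<delta> X) F)
      has_real_derivative integral \<Omega> (\<lambda>X. ddot (elast mu lam (E X)) (\<delta> X))) (at 0)"
    unfolding a_def
    by (simp only:) (intro has_real_derivative_half_integral_quadratic
        integrable_on_continuous_on_closure[OF \<Omega>] continuous_intros p E \<delta>)
qed

lemma is_vd_F_Ham: "is_vd_F \<Omega> (Ham rho0 mu lam \<Omega>) p E F (\<lambda>X. 0)"
  unfolding is_vd_F_def Ham_def by (simp add: ddot_def)

section \<open>Skew-adjointness of the structure operator\<close>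

lemmas C1_on_matrix_mult = C1_on_bilinear[OF bounded_bilinear_matrix_matrix_mult]

lemma continuous_on_aop: "C1_on \<Omega> F \<Longrightarrow> C1_on \<Omega> w \<Longrightarrow> continuous_on \<Omega> (aop F w)"
  unfolding aop_def[abs_def] by (intro continuous_intros continuous_on_Grad C1_on_continuous_on)

text \<open>The key identity: for symmetric \<open>S\<close>, \<open>S : a(F, w) = (F S) : Grad w\<close>.\<close>
lemma divergence_flux:
  assumes F: "C1_on \<Omega> F" and w: "C1_on \<Omega> w" and S: "C1_on \<Omega> S" and R: "C1_on \<Omega> R"
    and X: "X \<in> \<Omega>" and sym: "transpose (S X) = S X"
  shows "divergence (\<lambda>Y. w Y v* (F Y ** S Y + R Y)) X
       = w X \<bullet> (Div (\<lambda>Y. F Y ** S Y) X + Div R X) + ddot (S X) (aop F w X) + ddot (R X) (Grad w X)"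
proof -
  have FS: "C1_on \<Omega> (\<lambda>Y. F Y ** S Y)" by (rule C1_on_matrix_mult[OF F S])
  have "divergence (\<lambda>Y. w Y v* (F Y ** S Y + R Y)) X
      = w X \<bullet> Div (\<lambda>Y. F Y ** S Y + R Y) X + ddot (Grad w X) (F X ** S X + R X)"
    by (rule divergence_vector_matrix_mult[OF w C1_on_add[OF FS R] X])
  also have "Div (\<lambda>Y. F Y ** S Y + R Y) X = Div (\<lambda>Y. F Y ** S Y) X + Div R X"
    by (rule Div_add[OF FS R X])
  also have "ddot (Grad w X) (F X ** S X + R X) = ddot (S X) (aop F w X) + ddot (R X) (Grad w X)"
    using ddot_symmetrized_product[OF sym, of "F X" "Grad w X"]
    by (simp add: aop_def ddot_commute bounded_bilinear.add_right[OF bounded_bilinear_ddot])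
  finally show ?thesis by simp
qed

lemma eq_0_outside_csupp: "x \<notin> csupp f \<Longrightarrow> f x = 0"
  unfolding csupp_def by (meson closure_subset mem_Collect_eq subsetD)

definition Jop_density :: "(vec3 \<Rightarrow> ten3) \<Rightarrow> triple \<Rightarrow> triple \<Rightarrow> vec3 \<Rightarrow> real" where
  "Jop_density F w z X = (case w of (w1, w2, w3) \<Rightarrow> case z of (z1, z2, z3) \<Rightarrow>
     w1 X \<bullet> (Div (\<lambda>Y. F Y ** z2 Y) X + Div z3 X) + ddot (w2 X) (aop F z1 X) + ddot (w3 X) (Grad z1 X))"

definition Jop_flux :: "(vec3 \<Rightarrow> ten3) \<Rightarrow> triple \<Rightarrow> triple \<Rightarrow> vec3 \<Rightarrow> vec3" where
  "Jop_flux F w z Y = (case w of (w1, _, _) \<Rightarrow> case z of (_, z2, z3) \<Rightarrow> w1 Y v* (F Y ** z2 Y + z3 Y))"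

lemma pairing_Jop_right: "pairing \<Omega> w (Jop F z) = integral \<Omega> (Jop_density F w z)"
  by (cases w; cases z) (simp add: pairing_def Jop_def Jop_density_def[abs_def])

lemma pairing_Jop_left: "pairing \<Omega> (Jop F w) z = integral \<Omega> (Jop_density F z w)"
  by (cases w; cases z) (simp add: pairing_def Jop_def Jop_density_def[abs_def] inner_commute ddot_commute)

lemma test_triple_C1_on:
  assumes "test_triple \<Omega> (w1, w2, w3)"
  shows "C1_on \<Omega> w1" "C1_on \<Omega> w2" "C1_on \<Omega> w3"
  using assms smooth_on_C1_on unfolding test_triple_def test_sym_def test_field_def by auto

lemma test_triple_symmetric: "test_triple \<Omega> (w1, w2, w3) \<Longrightarrow> transpose (w2 X) = w2 X"
  unfolding test_triple_def test_sym_def by auto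

lemma test_triple_csupp:
  assumes "test_triple \<Omega> (w1, w2, w3)"
  shows "compact (csupp w1)" "compact (csupp w2)" "compact (csupp w3)"
    "csupp w1 \<subseteq> \<Omega>" "csupp w2 \<subseteq> \<Omega>" "csupp w3 \<subseteq> \<Omega>"
  using assms unfolding test_triple_def test_sym_def test_field_def by auto

lemma integrable_on_Jop_density:
  assumes \<Omega>: "open \<Omega>" and F: "C1_on \<Omega> F"
    and w: "test_triple \<Omega> (w1, w2, w3)" and z: "test_triple \<Omega> (z1, z2, z3)"
  shows "Jop_density F (w1, w2, w3) (z1, z2, z3) integrable_on \<Omega>"
proof (rule integrable_on_compact_support[OF \<Omega>, of "csupp w1 \<union> csupp w2 \<union> csupp w3"])
  note C1 = test_triple_C1_on[OF w] test_triple_C1_on[OF z]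
  show "compact (csupp w1 \<union> csupp w2 \<union> csupp w3)" "csupp w1 \<union> csupp w2 \<union> csupp w3 \<subseteq> \<Omega>"
    using test_triple_csupp[OF w] by auto
  show "continuous_on \<Omega> (Jop_density F (w1, w2, w3) (z1, z2, z3))"
    unfolding Jop_density_def[abs_def]
    by (simp, intro continuous_intros C1_on_continuous_on[OF C1(1)] C1_on_continuous_on[OF C1(2)]
        C1_on_continuous_on[OF C1(3)] continuous_on_Div[OF C1_on_matrix_mult[OF F C1(5)]]
        continuous_on_Div[OF C1(6)] continuous_on_aop[OF F C1(4)] continuous_on_Grad[OF C1(4)])
  show "Jop_density F (w1, w2, w3) (z1, z2, z3) X = 0" if "X \<notin> csupp w1 \<union> csupp w2 \<union> csupp w3" for X
    using that eq_0_outside_csupp[of X w1] eq_0_outside_csupp[of X w2] eq_0_outside_csupp[of X w3]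
    by (simp add: Jop_density_def ddot_def)
qed

lemma has_integral_divergence_Jop_flux:
  assumes \<Omega>: "open \<Omega>" and F: "C1_on \<Omega> F"
    and w: "test_triple \<Omega> (w1, w2, w3)" and z: "test_triple \<Omega> (z1, z2, z3)"
  shows "(divergence (Jop_flux F (w1, w2, w3) (z1, z2, z3)) has_integral 0) \<Omega>"
proof (rule has_integral_divergence_0[OF \<Omega> test_triple_csupp(1,4)[OF w]])
  note C1 = test_triple_C1_on[OF w] test_triple_C1_on[OF z]
  show "C1_on \<Omega> (Jop_flux F (w1, w2, w3) (z1, z2, z3))"
    unfolding Jop_flux_def[abs_def]
    by (simp, rule C1_on_bilinear[OF bounded_bilinear_vector_matrix_mult C1(1)
          C1_on_add[OF C1_on_matrix_mult[OF F C1(5)] C1(6)]])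
  show "Jop_flux F (w1, w2, w3) (z1, z2, z3) X = 0" if "X \<notin> csupp w1" for X
    using eq_0_outside_csupp[OF that]
    by (simp add: Jop_flux_def bounded_bilinear.zero_left[OF bounded_bilinear_vector_matrix_mult])
qed

lemma Jop_density_add_eq_divergence:
  assumes F: "C1_on \<Omega> F" and w: "test_triple \<Omega> (w1, w2, w3)" and z: "test_triple \<Omega> (z1, z2, z3)"
    and X: "X \<in> \<Omega>"
  shows "Jop_density F (w1, w2, w3) (z1, z2, z3) X + Jop_density F (z1, z2, z3) (w1, w2, w3) X
    = divergence (Jop_flux F (w1, w2, w3) (z1, z2, z3)) X + divergence (Jop_flux F (z1, z2, z3) (w1, w2, w3)) X"
proof -
  note C1 = test_triple_C1_on[OF w] test_triple_C1_on[OF z]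
  show ?thesis
    using divergence_flux[OF F C1(1,5,6) X test_triple_symmetric[OF z]]
      divergence_flux[OF F C1(4,2,3) X test_triple_symmetric[OF w]]
    by (simp add: Jop_density_def Jop_flux_def[abs_def])
qed

lemma formally_skew_adjoint_Jop:
  assumes \<Omega>: "open \<Omega>" and F: "C1_on \<Omega> F"
  shows "formally_skew_adjoint \<Omega> (Jop F)"
  unfolding formally_skew_adjoint_def
proof (intro allI impI, elim conjE)
  fix w z assume "test_triple \<Omega> w" "test_triple \<Omega> z"
  moreover obtain w1 w2 w3 z1 z2 z3 where "w = (w1, w2, w3)" "z = (z1, z2, z3)"
    by (cases w; cases z)
  ultimately have w: "test_triple \<Omega> (w1, w2, w3)" and z: "test_triple \<Omega> (z1, z2, z3)"
    and wz: "w = (w1, w2, w3)" "z = (z1, z2, z3)" by simp_all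
  have "((\<lambda>X. Jop_density F w z X + Jop_density F z w X) has_integral 0) \<Omega>"
    using has_integral_add[OF has_integral_divergence_Jop_flux[OF \<Omega> F w z]
        has_integral_divergence_Jop_flux[OF \<Omega> F z w]]
    unfolding add_0_right by (rule has_integral_eq[rotated]) (simp add: wz Jop_density_add_eq_divergence[OF F w z])
  moreover have "((\<lambda>X. Jop_density F w z X + Jop_density F z w X) has_integral
      integral \<Omega> (Jop_density F w z) + integral \<Omega> (Jop_density F z w)) \<Omega>"
    unfolding wz by (intro has_integral_add integrable_integral integrable_on_Jop_density[OF \<Omega> F w z]
        integrable_on_Jop_density[OF \<Omega> F z w])
  ultimately have "integral \<Omega> (Jop_density F w z) + integral \<Omega> (Jop_density F z w) = 0"
    by (rule has_integral_unique[symmetric])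
  then show "pairing \<Omega> w (Jop F z) = - pairing \<Omega> (Jop F w) z"
    unfolding pairing_Jop_right pairing_Jop_left by linarith
qed

theorem theorem1:
  fixes \<Omega>0 :: "(real^3) set" and W :: "((real^3) \<times> real) set"
    and u :: "real^3 \<Rightarrow> real \<Rightarrow> real^3"
    and t0 te rho0 mu lam :: real
  assumes dom: "open \<Omega>0" "connected \<Omega>0" "bounded \<Omega>0" "\<Omega>0 \<noteq> {}"
    and tint: "t0 < te"
    and smooth: "closure \<Omega>0 \<times> {t0..te} \<subseteq> W" "smooth_on W (\<lambda>(X, t). u X t)"
    and rho: "rho0 > 0"
    and balance: "\<forall>X\<in>\<Omega>0. \<forall>t\<in>{t0..te}.
        rho0 *\<^sub>R tder (vel u X) t = Div (\<lambda>Y. defgrad u Y t ** PK2 mu lam u Y t) X"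
  shows "\<forall>t\<in>{t0..te}.
      is_vd_p \<Omega>0 (Ham rho0 mu lam \<Omega>0) (\<lambda>Y. mom rho0 u Y t) (\<lambda>Y. green u Y t) (\<lambda>Y. defgrad u Y t)
         (\<lambda>Y. vel u Y t)
    \<and> is_vd_E \<Omega>0 (Ham rho0 mu lam \<Omega>0) (\<lambda>Y. mom rho0 u Y t) (\<lambda>Y. green u Y t) (\<lambda>Y. defgrad u Y t)
         (\<lambda>Y. PK2 mu lam u Y t)
    \<and> is_vd_F \<Omega>0 (Ham rho0 mu lam \<Omega>0) (\<lambda>Y. mom rho0 u Y t) (\<lambda>Y. green u Y t) (\<lambda>Y. defgrad u Y t)
         (\<lambda>Y. 0)
    \<and> (\<forall>X\<in>\<Omega>0.
         (tder (mom rho0 u X) t, tder (green u X) t, tder (defgrad u X) t)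
         = evalT (Jop (\<lambda>Y. defgrad u Y t)
                   (\<lambda>Y. vel u Y t, \<lambda>Y. PK2 mu lam u Y t, \<lambda>Y. 0)) X)
    \<and> formally_skew_adjoint \<Omega>0 (Jop (\<lambda>Y. defgrad u Y t))"
proof
  fix t assume t: "t \<in> {t0..te}"
  let ?H = "Ham rho0 mu lam \<Omega>0" and ?p = "\<lambda>Y. mom rho0 u Y t"
    and ?E = "\<lambda>Y. green u Y t" and ?F = "\<lambda>Y. defgrad u Y t"
  have closure_in_W: "(Y, t) \<in> W" if "Y \<in> closure \<Omega>0" for Y
    using smooth(1) t that by auto
  then have in_W: "(Y, t) \<in> W" if "Y \<in> \<Omega>0" for Y
    using that closure_subset by blast
  have v: "continuous_on (closure \<Omega>0) (\<lambda>Y. vel u Y t)"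
    by (rule continuous_on_vel[OF smooth(2) closure_in_W])
  have E: "continuous_on (closure \<Omega>0) ?E"
    by (rule continuous_on_green[OF smooth(2) closure_in_W])
  have "is_vd_p \<Omega>0 ?H ?p ?E ?F (\<lambda>Y. vel u Y t)"
    unfolding mom_def using rho by (intro is_vd_p_Ham[OF dom(1,3) _ v E]) simp
  moreover have "is_vd_E \<Omega>0 ?H ?p ?E ?F (\<lambda>Y. PK2 mu lam u Y t)"
    unfolding PK2_def using v by (intro is_vd_E_Ham[OF dom(1,3) _ E]) (simp add: mom_def continuous_intros)
  moreover have "is_vd_F \<Omega>0 ?H ?p ?E ?F (\<lambda>Y. 0)"
    by (rule is_vd_F_Ham)
  moreover have "\<forall>X\<in>\<Omega>0. (tder (mom rho0 u X) t, tder (green u X) t, tder (defgrad u X) t)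
      = evalT (Jop ?F (\<lambda>Y. vel u Y t, \<lambda>Y. PK2 mu lam u Y t, \<lambda>Y. 0)) X"
    using evolution_equations[OF smooth(2) in_W] balance t by blast
  moreover have "formally_skew_adjoint \<Omega>0 (Jop ?F)"
    by (rule formally_skew_adjoint_Jop[OF dom(1) C1_on_defgrad[OF smooth(2) in_W]])
  ultimately show "is_vd_p \<Omega>0 ?H ?p ?E ?F (\<lambda>Y. vel u Y t)
    \<and> is_vd_E \<Omega>0 ?H ?p ?E ?F (\<lambda>Y. PK2 mu lam u Y t)
    \<and> is_vd_F \<Omega>0 ?H ?p ?E ?F (\<lambda>Y. 0)
    \<and> (\<forall>X\<in>\<Omega>0. (tder (mom rho0 u X) t, tder (green u X) t, tder (defgrad u X) t)
         = evalT (Jop ?F (\<lambda>Y. vel u Y t, \<lambda>Y. PK2 mu lam u Y t, \<lambda>Y. 0)) X)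
    \<and> formally_skew_adjoint \<Omega>0 (Jop ?F)"
    by blast
qed

end
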